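(* Assume Assumption A-0 holds, let $T\ge1$, let $\psi_T$ be a bounded measurable function on $\mathbb{R}^d$, and let $(b_N)$ be positive reals with $b_N\to\infty$, $\sqrt N/b_N\to\infty$. Define $$R_N^T=\frac{\sqrt N}{b_N}\Big(\frac{\sum_{i=1}^NL_T\psi_T(x_{i,T-1})}{\sum_{i=1}^NL_T\mathbb{1}(x_{i,T-1})}-m_T(\psi_T)\Big),\qquad \tilde R_N^T=\frac{1}{b_N\sqrt N\,\kappa_T}\Big(\sum_{i=1}^NL_T\psi_T(x_{i,T-1})-m_T(\psi_T)\sum_{i=1}^NL_T\mathbb{1}(x_{i,T-1})\Big).$$ Then for every $\delta>0$, $$\limsup_{N\to\infty}\frac1{b_N^2}\log\mathbb{P}_T(|R_N^T-\tilde R_N^T|>\delta)=-\infty.$$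
   Context: Hidden Markov model: Markov chain $(X_t)$ on $\mathbb{R}^d$ with initial density $a_0$ and transition densities $a_t(x,x')$ w.r.t. a measure $\mu$; observation densities $b_t(x,y)$ w.r.t. a measure $\nu$; observations $y_1,\dots,y_T$ fixed, $\mathbb{P}_T=\mathbb{P}(\cdot\mid Y_1=y_1,\dots,Y_T=y_T)$. Filter: $f_{0|0}=a_0$, $f_{t|t}(x)\propto b_t(x,y_t)\int f_{t-1|t-1}(u)a_t(u,x)\mu(du)$ (normalized). Particle filter: $(x_{i,0})_{i\le N}$ i.i.d. with law $a_0d\mu$; given generations up to $t-1$, $(x_{i,t})_{i\le N}$ i.i.d. with law $f^N_{t|t}d\mu$, $f^N_{t|t}(x)\propto b_t(x,y_t)\frac1N\sum_ia_t(x_{i,t-1},x)$ (normalized). Notation: $m_t(\psi)=\int\psi f_{t|t}d\mu$; $L_t\psi(x)=\int a_t(x,u)b_t(u,y_t)\psi(u)\mu(du)$; $\mathbb{1}\equiv1$. Assumption A-0: for every $t\ge1$, $\sup_xL_t\mathbb{1}(x)<\infty$ and $L_t\mathbb{1}(x)>0$ for all $x$; $\kappa_t:=\int L_t\mathbb{1}\,f_{t-1|t-1}d\mu>0$. *)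

theory Defs
  imports "HOL-Probability.Probability"
begin

text \<open>Hidden Markov model on a Euclidean space 'a (= R^d), reference measure mu on 'a,
  transition densities a t x x', observation densities b t x y, fixed observations y t.\<close>

definition Lop :: "'a measure \<Rightarrow> (nat \<Rightarrow> 'a \<Rightarrow> 'a \<Rightarrow> real) \<Rightarrow> (nat \<Rightarrow> 'a \<Rightarrow> 'b \<Rightarrow> real)
    \<Rightarrow> (nat \<Rightarrow> 'b) \<Rightarrow> nat \<Rightarrow> ('a \<Rightarrow> real) \<Rightarrow> 'a \<Rightarrow> real" where
  "Lop \<mu> a b y t \<psi> x = (\<integral>u. a t x u * b t u (y t) * \<psi> u \<partial>\<mu>)"

primrec filt :: "'a measure \<Rightarrow> ('a \<Rightarrow> real) \<Rightarrow> (nat \<Rightarrow> 'a \<Rightarrow> 'a \<Rightarrow> real) \<Rightarrow> (nat \<Rightarrow> 'a \<Rightarrow> 'b \<Rightarrow> real)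
    \<Rightarrow> (nat \<Rightarrow> 'b) \<Rightarrow> nat \<Rightarrow> 'a \<Rightarrow> real" where
  "filt \<mu> a0 a b y 0 = a0"
| "filt \<mu> a0 a b y (Suc t) =
     (\<lambda>x. b (Suc t) x (y (Suc t)) * (\<integral>u. filt \<mu> a0 a b y t u * a (Suc t) u x \<partial>\<mu>)
        / (\<integral>x'. b (Suc t) x' (y (Suc t)) * (\<integral>u. filt \<mu> a0 a b y t u * a (Suc t) u x' \<partial>\<mu>) \<partial>\<mu>))"

definition mfilt :: "'a measure \<Rightarrow> ('a \<Rightarrow> real) \<Rightarrow> (nat \<Rightarrow> 'a \<Rightarrow> 'a \<Rightarrow> real) \<Rightarrow> (nat \<Rightarrow> 'a \<Rightarrow> 'b \<Rightarrow> real)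
    \<Rightarrow> (nat \<Rightarrow> 'b) \<Rightarrow> nat \<Rightarrow> ('a \<Rightarrow> real) \<Rightarrow> real" where
  "mfilt \<mu> a0 a b y t \<psi> = (\<integral>x. \<psi> x * filt \<mu> a0 a b y t x \<partial>\<mu>)"

definition kappa :: "'a measure \<Rightarrow> ('a \<Rightarrow> real) \<Rightarrow> (nat \<Rightarrow> 'a \<Rightarrow> 'a \<Rightarrow> real) \<Rightarrow> (nat \<Rightarrow> 'a \<Rightarrow> 'b \<Rightarrow> real)
    \<Rightarrow> (nat \<Rightarrow> 'b) \<Rightarrow> nat \<Rightarrow> real" where
  "kappa \<mu> a0 a b y t = (\<integral>x. Lop \<mu> a b y t (\<lambda>_. 1) x * filt \<mu> a0 a b y (t - 1) x \<partial>\<mu>)"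

definition pf_dens :: "'a measure \<Rightarrow> (nat \<Rightarrow> 'a \<Rightarrow> 'a \<Rightarrow> real) \<Rightarrow> (nat \<Rightarrow> 'a \<Rightarrow> 'b \<Rightarrow> real)
    \<Rightarrow> (nat \<Rightarrow> 'b) \<Rightarrow> nat \<Rightarrow> nat \<Rightarrow> (nat \<Rightarrow> 'a) \<Rightarrow> 'a \<Rightarrow> real" where
  "pf_dens \<mu> a b y N t xs x =
     b t x (y t) * ((\<Sum>i<N. a t (xs i) x) / real N)
     / (\<integral>x'. b t x' (y t) * ((\<Sum>i<N. a t (xs i) x') / real N) \<partial>\<mu>)"

text \<open>Law of the generation t of the particle system (x_{i,t})_{i<N}: generation 0 is i.i.d. a0 dmu,
  generation t is, conditionally on generation t-1, i.i.d. with law f^N_{t|t} dmu.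
  (Only the marginal law of one generation is needed in the statement.)\<close>
primrec pf_law :: "'a measure \<Rightarrow> ('a \<Rightarrow> real) \<Rightarrow> (nat \<Rightarrow> 'a \<Rightarrow> 'a \<Rightarrow> real) \<Rightarrow> (nat \<Rightarrow> 'a \<Rightarrow> 'b \<Rightarrow> real)
    \<Rightarrow> (nat \<Rightarrow> 'b) \<Rightarrow> nat \<Rightarrow> nat \<Rightarrow> (nat \<Rightarrow> 'a) measure" where
  "pf_law \<mu> a0 a b y N 0 = PiM {..<N} (\<lambda>_. density \<mu> (\<lambda>x. ennreal (a0 x)))"
| "pf_law \<mu> a0 a b y N (Suc t) =
     pf_law \<mu> a0 a b y N t \<bind>
       (\<lambda>xs. PiM {..<N} (\<lambda>_. density \<mu> (\<lambda>x. ennreal (pf_dens \<mu> a b y N (Suc t) xs x))))"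

definition eln :: "real \<Rightarrow> ereal" where
  "eln p = (if p \<le> 0 then -\<infinity> else ereal (ln p))"

end

theory Submission
  imports Defs
begin

text \<open>
  Let p and q be the empirical means of L_T psi and L_T 1 over generation T - 1 of the particle
  system, kappa = kappa_T and m = m_T(psi). Since m_T(psi) = m_{T-1}(L_T psi) / kappa and
  kappa = m_{T-1}(L_T 1), the difference R_N - R~_N equals (sqrt N / b_N) (p / q - m) (kappa - q) / kappa,
  a product of two fluctuations of empirical means.

  Every empirical mean of a bounded measurable function over generation t deviates from its
  filter mean by eps with probability at most C exp (- c N eps^2). This is proved by induction
  on t: generation t + 1 is, conditionally on generation t, an i.i.d. sample whose mean is a
  ratio of two empirical means over generation t, so Hoeffding's inequality and the induction
  hypothesis for numerator and denominator combine.

  Forcing both fluctuations below eta with N eta^2 proportional to delta sqrt N b_N makes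
  |R_N - R~_N| <= delta outside an event of probability C exp (- K sqrt N b_N); since
  sqrt N / b_N tends to infinity, this is o(exp (- M b_N^2)) for every M.
\<close>

section \<open>Exponential concentration\<close>

definition empirical_mean :: "nat \<Rightarrow> ('a \<Rightarrow> real) \<Rightarrow> (nat \<Rightarrow> 'a) \<Rightarrow> real" where
  "empirical_mean N \<phi> xs = (\<Sum>i<N. \<phi> (xs i)) / real N"

lemma borel_measurable_empirical_mean:
  assumes "\<phi> \<in> borel_measurable M"
  shows "empirical_mean N \<phi> \<in> borel_measurable (PiM {..<N} (\<lambda>_. M))"
  unfolding empirical_mean_def[abs_def] using assms by measurable

lemma indep_vars_PiM_components:
  assumes Q: "prob_space Q" and "finite I"
  shows "prob_space.indep_vars (PiM I (\<lambda>_. Q)) (\<lambda>_. Q) (\<lambda>i xs. xs i) I"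
proof -
  interpret PS: prob_space "PiM I (\<lambda>_. Q)" by (rule prob_space_PiM) (use Q in auto)
  show ?thesis
  proof (cases "I = {}")
    case True
    then show ?thesis
      by (subst PS.indep_vars_def, subst PS.indep_sets_def) simp_all
  next
    case False
    show ?thesis
    proof (subst PS.indep_vars_iff_distr_eq_PiM'[OF False])
      show "(\<lambda>xs. xs i) \<in> PiM I (\<lambda>_. Q) \<rightarrow>\<^sub>M Q" if "i \<in> I" for i
        using that by measurable
      have "distr (PiM I (\<lambda>_. Q)) (PiM I (\<lambda>_. Q)) (\<lambda>xs. restrict xs I) = PiM I (\<lambda>_. Q)"
        by (subst distr_cong[of _ _ _ _ _ "\<lambda>x. x"]) (auto simp: space_PiM PiE_def extensional_restrict)
      also have "\<dots> = PiM I (\<lambda>i. distr (PiM I (\<lambda>_. Q)) Q (\<lambda>xs. xs i))"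
        by (rule PiM_cong) (auto simp: distr_PiM_component[OF Q])
      finally show "distr (PiM I (\<lambda>_. Q)) (PiM I (\<lambda>_. Q)) (\<lambda>xs. restrict xs I)
          = PiM I (\<lambda>i. distr (PiM I (\<lambda>_. Q)) Q (\<lambda>xs. xs i))" .
    qed
  qed
qed

lemma Hoeffding_empirical_mean:
  fixes Q :: "'a measure" and \<phi> :: "'a \<Rightarrow> real"
  assumes Q: "prob_space Q" and \<phi>: "\<phi> \<in> borel_measurable Q" "\<And>x. \<bar>\<phi> x\<bar> \<le> M"
    and M: "M > 0" and N: "N > 0" and \<epsilon>: "\<epsilon> \<ge> 0"
  shows "measure (PiM {..<N} (\<lambda>_. Q))
           {xs \<in> space (PiM {..<N} (\<lambda>_. Q)). \<epsilon> \<le> \<bar>empirical_mean N \<phi> xs - (\<integral>x. \<phi> x \<partial>Q)\<bar>}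
         \<le> 2 * exp (- real N * \<epsilon>\<^sup>2 / (2 * M\<^sup>2))"
proof -
  define I where "I = {..<N}"
  define Pi where "Pi = PiM I (\<lambda>_. Q)"
  interpret PS: prob_space Pi unfolding Pi_def by (rule prob_space_PiM) (use Q in auto)
  have I0: "0 \<in> I" using N by (simp add: I_def)
  have component: "distr Pi Q (\<lambda>xs. xs i) = Q" if "i \<in> I" for i
    unfolding Pi_def by (rule distr_PiM_component) (use Q that in auto)
  have distr_\<phi>: "distr Pi borel (\<lambda>xs. \<phi> (xs i)) = distr Q borel \<phi>" if "i \<in> I" for i
  proof -
    have "distr Pi borel (\<lambda>xs. \<phi> (xs i)) = distr (distr Pi Q (\<lambda>xs. xs i)) borel \<phi>"
      by (rule distr_distr[symmetric, simplified comp_def]) (use \<phi> that in \<open>auto simp: Pi_def\<close>)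
    then show ?thesis using component[OF that] by simp
  qed
  interpret H: Hoeffding_ineq_iid Pi I "\<lambda>i xs. \<phi> (xs i)" "\<lambda>xs. \<phi> (xs 0)" "-M" M
    "PS.expectation (\<lambda>xs. \<phi> (xs 0))"
  proof unfold_locales
    show "finite I" by (simp add: I_def)
    show "PS.indep_vars (\<lambda>_. borel) (\<lambda>i xs. \<phi> (xs i)) I"
      using PS.indep_vars_compose2[OF indep_vars_PiM_components[OF Q, of I, folded Pi_def]] \<phi>(1)
      by (simp add: I_def)
    show "distr Pi borel (\<lambda>xs. \<phi> (xs i)) = distr Pi borel (\<lambda>xs. \<phi> (xs 0))" if "i \<in> I" for i
      using distr_\<phi>[OF that] distr_\<phi>[OF I0] by simp
    show "(\<lambda>xs. \<phi> (xs 0)) \<in> borel_measurable Pi"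
      unfolding Pi_def using I0 \<phi>(1) by measurable
    show "AE xs in Pi. \<phi> (xs 0) \<in> {- M..M}"
    proof (rule AE_I2)
      show "\<phi> (xs 0) \<in> {- M..M}" for xs :: "nat \<Rightarrow> 'a"
        using \<phi>(2)[of "xs 0"] by (auto simp: abs_le_iff)
    qed
  qed simp
  have mean: "PS.expectation (\<lambda>xs. \<phi> (xs 0)) = (\<integral>x. \<phi> x \<partial>Q)"
  proof -
    have "PS.expectation (\<lambda>xs. \<phi> (xs 0)) = integral\<^sup>L (distr Pi Q (\<lambda>xs. xs 0)) \<phi>"
      by (rule integral_distr[symmetric]) (use \<phi> I0 in \<open>auto simp: Pi_def\<close>)
    then show ?thesis using component[OF I0] by simp
  qed
  have "PS.prob {xs \<in> space Pi. \<bar>(\<Sum>i\<in>I. \<phi> (xs i)) / real (card I) - PS.expectation (\<lambda>xs. \<phi> (xs 0))\<bar> \<ge> \<epsilon>}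
        \<le> 2 * exp (- 2 * real (card I) * \<epsilon>\<^sup>2 / (M - - M)\<^sup>2)"
    by (rule H.Hoeffding_ineq_abs_ge'[OF \<epsilon>]) (use M N in \<open>auto simp: I_def\<close>)
  also have "- 2 * real (card I) * \<epsilon>\<^sup>2 / (M - - M)\<^sup>2 = - real N * \<epsilon>\<^sup>2 / (2 * M\<^sup>2)"
    by (simp add: I_def power2_eq_square field_simps)
  finally show ?thesis
    unfolding mean by (simp add: I_def Pi_def empirical_mean_def)
qed

lemma measure_bind_le:
  assumes M: "prob_space M" and K: "K \<in> M \<rightarrow>\<^sub>M prob_algebra S"
    and A: "A \<in> sets S" and B: "B \<in> sets M" and h: "h \<ge> 0"
    and bound: "\<And>x. x \<in> space M \<Longrightarrow> x \<notin> B \<Longrightarrow> measure (K x) A \<le> h"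
  shows "measure (M \<bind> K) A \<le> h + measure M B"
proof -
  interpret M: prob_space M by (rule M)
  have K_prob: "prob_space (K x)" if "x \<in> space M" for x
    using measurable_space[OF K that] by (simp add: space_prob_algebra)
  have K_sub: "K \<in> M \<rightarrow>\<^sub>M subprob_algebra S"
    by (rule measurable_prob_algebraD[OF K])
  have pointwise: "emeasure (K x) A \<le> ennreal h + indicator B x" if x: "x \<in> space M" for x
  proof -
    interpret Kx: prob_space "K x" by (rule K_prob[OF x])
    show ?thesis
    proof (cases "x \<in> B")
      case True
      have "emeasure (K x) A \<le> 1" by (rule Kx.emeasure_le_1)
      also have "\<dots> \<le> ennreal h + indicator B x" using True by simp
      finally show ?thesis .
    next
      case False
      then show ?thesis
        using bound[OF x False] by (simp add: Kx.emeasure_eq_measure add_increasing2 ennreal_leI)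
    qed
  qed
  interpret MK: prob_space "M \<bind> K"
    by (rule prob_space_bind'[OF _ K]) (simp add: space_prob_algebra M)
  have "emeasure (M \<bind> K) A = (\<integral>\<^sup>+x. emeasure (K x) A \<partial>M)"
    by (rule emeasure_bind[OF _ K_sub A]) (use M.not_empty in auto)
  also have "\<dots> \<le> (\<integral>\<^sup>+x. ennreal h + indicator B x \<partial>M)"
    by (intro nn_integral_mono pointwise)
  also have "\<dots> = ennreal (h + measure M B)"
    using B h by (simp add: nn_integral_add M.emeasure_eq_measure M.prob_space)
  finally have "ennreal (measure (M \<bind> K) A) \<le> ennreal (h + measure M B)"
    by (simp only: MK.emeasure_eq_measure)
  then show ?thesis
    using h by (subst (asm) ennreal_le_iff) auto
qed

definition exp_concentrated :: "(nat \<Rightarrow> 'x measure) \<Rightarrow> (nat \<Rightarrow> 'x \<Rightarrow> real) \<Rightarrow> real \<Rightarrow> bool" where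
  "exp_concentrated P F v \<longleftrightarrow> (\<exists>C c. C \<ge> 0 \<and> c > 0 \<and> (\<forall>N>0. \<forall>\<epsilon>>0.
     measure (P N) {x \<in> space (P N). \<epsilon> \<le> \<bar>F N x - v\<bar>} \<le> C * exp (- c * (real N * \<epsilon>\<^sup>2))))"

lemma exp_concentratedI:
  assumes "C \<ge> 0" "c > 0"
    and "\<And>N \<epsilon>. N > 0 \<Longrightarrow> \<epsilon> > 0 \<Longrightarrow>
           measure (P N) {x \<in> space (P N). \<epsilon> \<le> \<bar>F N x - v\<bar>} \<le> C * exp (- c * (real N * \<epsilon>\<^sup>2))"
  shows "exp_concentrated P F v"
  using assms unfolding exp_concentrated_def by blast

lemma exp_neg_rescale_le:
  fixes c c' x r \<epsilon> :: real
  assumes "c \<le> c' * r\<^sup>2" "x \<ge> 0"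
  shows "exp (- c' * (x * (r * \<epsilon>)\<^sup>2)) \<le> exp (- c * (x * \<epsilon>\<^sup>2))"
proof -
  have "c * (x * \<epsilon>\<^sup>2) \<le> (c' * r\<^sup>2) * (x * \<epsilon>\<^sup>2)"
    using assms by (intro mult_right_mono) auto
  then show ?thesis by (simp add: power_mult_distrib mult_ac)
qed

lemma (in prob_space) prob_le_prob_cover:
  assumes "A \<subseteq> B1 \<union> B2" "B1 \<in> events" "B2 \<in> events"
  shows "prob A \<le> prob B1 + prob B2"
proof -
  have "prob A \<le> prob (B1 \<union> B2)"
    using assms by (intro finite_measure_mono) auto
  also have "\<dots> \<le> prob B1 + prob B2"
    using assms by (intro measure_Un_le) auto
  finally show ?thesis .
qed

lemma deviation_set_sets:
  fixes f :: "'x \<Rightarrow> real"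
  assumes [measurable]: "f \<in> borel_measurable M"
  shows "{x \<in> space M. r \<le> \<bar>f x - v\<bar>} \<in> sets M"
  by measurable

lemma ratio_deviation_le:
  fixes p q p' k M :: real
  assumes q: "q > 0" and k: "k > 0" and p: "\<bar>p\<bar> \<le> M * q"
  shows "\<bar>p / q - p' / k\<bar> \<le> (\<bar>p - p'\<bar> + M * \<bar>q - k\<bar>) / k"
proof -
  have "p / q - p' / k = ((p - p') + (p / q) * (k - q)) / k"
    using q k by (simp add: field_simps)
  also have "\<bar>\<dots>\<bar> \<le> (\<bar>p - p'\<bar> + \<bar>p / q\<bar> * \<bar>q - k\<bar>) / k"
    using k by (simp add: divide_right_mono abs_triangle_ineq[THEN order_trans] abs_mult
        abs_minus_commute)
  also have "\<dots> \<le> (\<bar>p - p'\<bar> + M * \<bar>q - k\<bar>) / k"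
    using q k p by (intro divide_right_mono add_left_mono mult_right_mono) (auto simp: pos_divide_le_eq)
  finally show ?thesis .
qed

lemma exp_concentrated_of_cover:
  fixes P :: "nat \<Rightarrow> 'x measure" and F G H :: "nat \<Rightarrow> 'x \<Rightarrow> real"
  assumes P: "\<And>N. N > 0 \<Longrightarrow> prob_space (P N)"
    and F_meas: "\<And>N. N > 0 \<Longrightarrow> F N \<in> borel_measurable (P N)"
    and G_meas: "\<And>N. N > 0 \<Longrightarrow> G N \<in> borel_measurable (P N)"
    and F: "exp_concentrated P F p" and G: "exp_concentrated P G q" and r: "r > 0" "r' > 0"
    and cover: "\<And>N \<epsilon> x. N > 0 \<Longrightarrow> \<epsilon> > 0 \<Longrightarrow> \<epsilon> \<le> \<bar>H N x - v\<bar> \<Longrightarrow>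
      r * \<epsilon> \<le> \<bar>F N x - p\<bar> \<or> r' * \<epsilon> \<le> \<bar>G N x - q\<bar>"
  shows "exp_concentrated P H v"
proof -
  obtain C1 c1 where C1: "C1 \<ge> 0" "c1 > 0" and F_tail:
    "\<And>N \<epsilon>. N > 0 \<Longrightarrow> \<epsilon> > 0 \<Longrightarrow>
       measure (P N) {x \<in> space (P N). \<epsilon> \<le> \<bar>F N x - p\<bar>} \<le> C1 * exp (- c1 * (real N * \<epsilon>\<^sup>2))"
    using F unfolding exp_concentrated_def by blast
  obtain C2 c2 where C2: "C2 \<ge> 0" "c2 > 0" and G_tail:
    "\<And>N \<epsilon>. N > 0 \<Longrightarrow> \<epsilon> > 0 \<Longrightarrow>
       measure (P N) {x \<in> space (P N). \<epsilon> \<le> \<bar>G N x - q\<bar>} \<le> C2 * exp (- c2 * (real N * \<epsilon>\<^sup>2))"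
    using G unfolding exp_concentrated_def by blast
  define c where "c = min (c1 * r\<^sup>2) (c2 * r'\<^sup>2)"
  show ?thesis
  proof (rule exp_concentratedI)
    show "C1 + C2 \<ge> 0" "c > 0" using C1 C2 r by (auto simp: c_def)
    fix N :: nat and \<epsilon> :: real assume N: "N > 0" and \<epsilon>: "\<epsilon> > 0"
    interpret prob_space "P N" by (rule P[OF N])
    have "{x \<in> space (P N). \<epsilon> \<le> \<bar>H N x - v\<bar>}
        \<subseteq> {x \<in> space (P N). r * \<epsilon> \<le> \<bar>F N x - p\<bar>} \<union> {x \<in> space (P N). r' * \<epsilon> \<le> \<bar>G N x - q\<bar>}"
      using cover[OF N \<epsilon>] by auto
    then have "prob {x \<in> space (P N). \<epsilon> \<le> \<bar>H N x - v\<bar>}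
        \<le> prob {x \<in> space (P N). r * \<epsilon> \<le> \<bar>F N x - p\<bar>} + prob {x \<in> space (P N). r' * \<epsilon> \<le> \<bar>G N x - q\<bar>}"
      using F_meas[OF N] G_meas[OF N] by (intro prob_le_prob_cover deviation_set_sets)
    also have "\<dots> \<le> C1 * exp (- c1 * (real N * (r * \<epsilon>)\<^sup>2)) + C2 * exp (- c2 * (real N * (r' * \<epsilon>)\<^sup>2))"
      using N \<epsilon> r by (intro add_mono F_tail G_tail) auto
    also have "\<dots> \<le> C1 * exp (- c * (real N * \<epsilon>\<^sup>2)) + C2 * exp (- c * (real N * \<epsilon>\<^sup>2))"
      using C1 C2 by (intro add_mono mult_left_mono exp_neg_rescale_le) (auto simp: c_def)
    finally show "prob {x \<in> space (P N). \<epsilon> \<le> \<bar>H N x - v\<bar>} \<le> (C1 + C2) * exp (- c * (real N * \<epsilon>\<^sup>2))"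
      by (simp add: distrib_right)
  qed
qed

lemma exp_concentrated_ratio:
  fixes P :: "nat \<Rightarrow> 'x measure" and F G :: "nat \<Rightarrow> 'x \<Rightarrow> real"
  assumes P: "\<And>N. N > 0 \<Longrightarrow> prob_space (P N)"
    and F_meas: "\<And>N. N > 0 \<Longrightarrow> F N \<in> borel_measurable (P N)"
    and G_meas: "\<And>N. N > 0 \<Longrightarrow> G N \<in> borel_measurable (P N)"
    and F: "exp_concentrated P F p" and G: "exp_concentrated P G k"
    and k: "k > 0" and M: "M > 0"
    and G_pos: "\<And>N x. N > 0 \<Longrightarrow> G N x > 0" and F_le: "\<And>N x. N > 0 \<Longrightarrow> \<bar>F N x\<bar> \<le> M * G N x"
  shows "exp_concentrated P (\<lambda>N x. F N x / G N x) (p / k)"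
proof (rule exp_concentrated_of_cover[OF P F_meas G_meas F G])
  show "k / 2 > 0" "k / (2 * M) > 0" using k M by auto
  fix N :: nat and \<epsilon> x assume N: "N > 0" and "\<epsilon> \<le> \<bar>F N x / G N x - p / k\<bar>"
  then have "k * \<epsilon> \<le> \<bar>F N x - p\<bar> + M * \<bar>G N x - k\<bar>"
    using ratio_deviation_le[OF G_pos[OF N, of x] k F_le[OF N, of x], of p] k by (simp add: field_simps)
  then show "k / 2 * \<epsilon> \<le> \<bar>F N x - p\<bar> \<or> k / (2 * M) * \<epsilon> \<le> \<bar>G N x - k\<bar>"
    using M by (auto simp: field_simps)
qed

lemma exp_concentrated_of_step_bound:
  fixes P P' :: "nat \<Rightarrow> 'x measure" and F F' :: "nat \<Rightarrow> 'x \<Rightarrow> real"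
  assumes F: "exp_concentrated P F v" and C0: "C0 \<ge> 0" and c0: "c0 > 0"
    and step: "\<And>N \<epsilon>. N > 0 \<Longrightarrow> \<epsilon> > 0 \<Longrightarrow>
      measure (P' N) {x \<in> space (P' N). \<epsilon> \<le> \<bar>F' N x - v\<bar>}
        \<le> C0 * exp (- c0 * (real N * \<epsilon>\<^sup>2)) + measure (P N) {x \<in> space (P N). \<epsilon> / 2 \<le> \<bar>F N x - v\<bar>}"
  shows "exp_concentrated P' F' v"
proof -
  obtain C c where C: "C \<ge> 0" "c > 0" and F_tail:
    "\<And>N \<epsilon>. N > 0 \<Longrightarrow> \<epsilon> > 0 \<Longrightarrow>
       measure (P N) {x \<in> space (P N). \<epsilon> \<le> \<bar>F N x - v\<bar>} \<le> C * exp (- c * (real N * \<epsilon>\<^sup>2))"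
    using F unfolding exp_concentrated_def by blast
  show ?thesis
  proof (rule exp_concentratedI)
    show "C0 + C \<ge> 0" "min c0 (c * (1 / 2)\<^sup>2) > 0" using C0 c0 C by auto
    fix N :: nat and \<epsilon> :: real assume N: "N > 0" and \<epsilon>: "\<epsilon> > 0"
    have "measure (P' N) {x \<in> space (P' N). \<epsilon> \<le> \<bar>F' N x - v\<bar>}
        \<le> C0 * exp (- c0 * (real N * \<epsilon>\<^sup>2)) + C * exp (- c * (real N * (1 / 2 * \<epsilon>)\<^sup>2))"
      using step[OF N \<epsilon>] F_tail[OF N, of "1 / 2 * \<epsilon>"] \<epsilon> by simp
    also have "\<dots> \<le> C0 * exp (- min c0 (c * (1 / 2)\<^sup>2) * (real N * \<epsilon>\<^sup>2))
                  + C * exp (- min c0 (c * (1 / 2)\<^sup>2) * (real N * \<epsilon>\<^sup>2))"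
      using exp_neg_rescale_le[of "min c0 (c * (1 / 2)\<^sup>2)" c0 1 "real N" \<epsilon>]
        exp_neg_rescale_le[of "min c0 (c * (1 / 2)\<^sup>2)" c "1 / 2" "real N" \<epsilon>] C0 C
      by (intro add_mono mult_left_mono) auto
    finally show "measure (P' N) {x \<in> space (P' N). \<epsilon> \<le> \<bar>F' N x - v\<bar>}
        \<le> (C0 + C) * exp (- min c0 (c * (1 / 2)\<^sup>2) * (real N * \<epsilon>\<^sup>2))"
      by (simp add: distrib_right)
  qed
qed

(* With s = sqrt N, S and Q the sums of L_T psi and L_T 1, m = m_T(psi) and k = kappa_T, the left-hand
   side is R_N - R~_N. *)
lemma ratio_linearization_identity:
  fixes S Q m k s b :: real
  assumes "Q \<noteq> 0" "k \<noteq> 0" "s > 0" "b \<noteq> 0"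
  shows "s / b * (S / Q - m) - 1 / (b * s * k) * (S - m * Q)
       = s / b * (S / Q - m) * ((k - Q / s\<^sup>2) / k)"
  using assms by (simp add: field_simps power2_eq_square)

lemma ratio_linearization_error_le:
  fixes S Q p k M \<eta> b :: real and N :: nat
  assumes N: "N > 0" and Q: "Q > 0" and k: "k > 0" and M: "M \<ge> 0" and b: "b > 0"
    and S_le: "\<bar>S\<bar> \<le> M * Q" and S_close: "\<bar>S / N - p\<bar> < \<eta>" and Q_close: "\<bar>Q / N - k\<bar> < \<eta>"
  shows "\<bar>sqrt N / b * (S / Q - p / k) - 1 / (b * sqrt N * k) * (S - p / k * Q)\<bar>
      \<le> sqrt N / b * ((1 + M) * \<eta>\<^sup>2 / k\<^sup>2)"
proof -
  define s where "s = sqrt N"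
  have s: "s > 0" "s\<^sup>2 = N" using N by (auto simp: s_def)
  define p' q' where "p' = S / N" and "q' = Q / N"
  have q': "q' > 0" "S / Q = p' / q'" "\<bar>p'\<bar> \<le> M * q'"
    using N Q S_le by (auto simp: p'_def q'_def divide_right_mono)
  have "\<bar>p' - p\<bar> + M * \<bar>q' - k\<bar> \<le> (1 + M) * \<eta>"
    using S_close Q_close M by (simp add: p'_def q'_def distrib_right add_mono mult_left_mono)
  then have ratio_close: "\<bar>p' / q' - p / k\<bar> \<le> (1 + M) * \<eta> / k"
    using ratio_deviation_le[OF q'(1) k q'(3), of p] k by (smt (verit) divide_right_mono)
  have "\<bar>s / b * (S / Q - p / k) - 1 / (b * s * k) * (S - p / k * Q)\<bar>
      = s / b * (\<bar>p' / q' - p / k\<bar> * \<bar>(k - q') / k\<bar>)"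
    using ratio_linearization_identity[of Q k s b S "p / k"] Q k s b
    by (simp add: q'(2) q'_def s(2) abs_mult)
  also have "\<dots> \<le> s / b * ((1 + M) * \<eta> / k * (\<eta> / k))"
    using ratio_close Q_close s b k M
    by (intro mult_left_mono mult_mono) (auto simp: q'_def abs_minus_commute divide_right_mono)
  finally show ?thesis
    by (simp add: s_def power2_eq_square)
qed

lemma (in prob_space) ratio_linearization_deviation_le:
  fixes S Q :: "'a \<Rightarrow> real" and N :: nat
  assumes S_meas: "S \<in> borel_measurable M" and Q_meas: "Q \<in> borel_measurable M"
    and N: "N > 0" and k: "k > 0" and C: "C \<ge> 0" and b: "b > 0"
    and Q_pos: "\<And>x. Q x > 0" and S_le: "\<And>x. \<bar>S x\<bar> \<le> C * Q x"
  shows "prob {x \<in> space M. sqrt N / b * ((1 + C) * \<eta>\<^sup>2 / k\<^sup>2)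
            < \<bar>sqrt N / b * (S x / Q x - p / k) - 1 / (b * sqrt N * k) * (S x - p / k * Q x)\<bar>}
         \<le> prob {x \<in> space M. \<eta> \<le> \<bar>S x / N - p\<bar>} + prob {x \<in> space M. \<eta> \<le> \<bar>Q x / N - k\<bar>}"
proof (rule prob_le_prob_cover)
  show "{x \<in> space M. sqrt N / b * ((1 + C) * \<eta>\<^sup>2 / k\<^sup>2)
            < \<bar>sqrt N / b * (S x / Q x - p / k) - 1 / (b * sqrt N * k) * (S x - p / k * Q x)\<bar>}
      \<subseteq> {x \<in> space M. \<eta> \<le> \<bar>S x / N - p\<bar>} \<union> {x \<in> space M. \<eta> \<le> \<bar>Q x / N - k\<bar>}"
  proof (rule subsetI, rule ccontr)
    fix x assume x: "x \<in> {x \<in> space M. sqrt N / b * ((1 + C) * \<eta>\<^sup>2 / k\<^sup>2)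
            < \<bar>sqrt N / b * (S x / Q x - p / k) - 1 / (b * sqrt N * k) * (S x - p / k * Q x)\<bar>}"
      and "x \<notin> {x \<in> space M. \<eta> \<le> \<bar>S x / N - p\<bar>} \<union> {x \<in> space M. \<eta> \<le> \<bar>Q x / N - k\<bar>}"
    then have "\<bar>sqrt N / b * (S x / Q x - p / k) - 1 / (b * sqrt N * k) * (S x - p / k * Q x)\<bar>
        \<le> sqrt N / b * ((1 + C) * \<eta>\<^sup>2 / k\<^sup>2)"
      by (intro ratio_linearization_error_le[OF N Q_pos k C b S_le]) auto
    with x show False by simp
  qed
qed (use S_meas Q_meas in \<open>auto intro: deviation_set_sets\<close>)

lemma ratio_linearization_tail:
  fixes P :: "nat \<Rightarrow> 'x measure" and S Q :: "nat \<Rightarrow> 'x \<Rightarrow> real" and b :: "nat \<Rightarrow> real"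
  assumes P: "\<And>N. N > 0 \<Longrightarrow> prob_space (P N)"
    and S_meas: "\<And>N. N > 0 \<Longrightarrow> S N \<in> borel_measurable (P N)"
    and Q_meas: "\<And>N. N > 0 \<Longrightarrow> Q N \<in> borel_measurable (P N)"
    and S: "exp_concentrated P (\<lambda>N x. S N x / real N) p"
    and Q: "exp_concentrated P (\<lambda>N x. Q N x / real N) k"
    and k: "k > 0" and M: "M \<ge> 0"
    and Q_pos: "\<And>N x. N > 0 \<Longrightarrow> Q N x > 0" and S_le: "\<And>N x. N > 0 \<Longrightarrow> \<bar>S N x\<bar> \<le> M * Q N x"
    and b: "\<And>N. b N > 0" and \<delta>: "\<delta> > 0" and m: "m = p / k"
  obtains C K where "C > 0" "K > 0"
    "\<And>N. N > 0 \<Longrightarrow> measure (P N) {x \<in> space (P N).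
        \<delta> < \<bar>sqrt (real N) / b N * (S N x / Q N x - m)
             - 1 / (b N * sqrt (real N) * k) * (S N x - m * Q N x)\<bar>}
      \<le> C * exp (- K * (sqrt (real N) * b N))"
proof -
  obtain C1 c1 where C1: "C1 \<ge> 0" "c1 > 0" and S_tail:
    "\<And>N \<epsilon>. N > 0 \<Longrightarrow> \<epsilon> > 0 \<Longrightarrow> measure (P N) {x \<in> space (P N). \<epsilon> \<le> \<bar>S N x / real N - p\<bar>}
       \<le> C1 * exp (- c1 * (real N * \<epsilon>\<^sup>2))"
    using S unfolding exp_concentrated_def by blast
  obtain C2 c2 where C2: "C2 \<ge> 0" "c2 > 0" and Q_tail:
    "\<And>N \<epsilon>. N > 0 \<Longrightarrow> \<epsilon> > 0 \<Longrightarrow> measure (P N) {x \<in> space (P N). \<epsilon> \<le> \<bar>Q N x / real N - k\<bar>}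
       \<le> C2 * exp (- c2 * (real N * \<epsilon>\<^sup>2))"
    using Q unfolding exp_concentrated_def by blast
  define d where "d = \<delta> * k\<^sup>2 / (1 + M)"
  define K where "K = min c1 c2 * d"
  have d: "d > 0" using \<delta> k M by (simp add: d_def)
  have tail: "measure (P N) {x \<in> space (P N).
        \<delta> < \<bar>sqrt (real N) / b N * (S N x / Q N x - m)
             - 1 / (b N * sqrt (real N) * k) * (S N x - m * Q N x)\<bar>}
      \<le> (C1 + C2 + 1) * exp (- K * (sqrt (real N) * b N))" if N: "N > 0" for N
  proof -
    interpret prob_space "P N" by (rule P[OF N])
    \<comment> \<open>chosen so that the bound of ratio_linearization_deviation_le is delta\<close>
    define \<eta> where "\<eta> = sqrt (d * b N / sqrt N)"
    have \<eta>: "\<eta> > 0" "\<eta>\<^sup>2 = d * b N / sqrt N"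
      using d b[of N] N by (auto simp: \<eta>_def)
    have error_le: "sqrt N / b N * ((1 + M) * \<eta>\<^sup>2 / k\<^sup>2) = \<delta>"
      using N b[of N] k M by (simp add: \<eta>(2) d_def)
    have rate: "exp (- c * (d * (sqrt N * b N))) \<le> exp (- K * (sqrt N * b N))" if "min c1 c2 \<le> c" for c
      using mult_right_mono[OF that, of "d * (sqrt N * b N)"] d b[of N] by (simp add: K_def mult.assoc)
    have "measure (P N) {x \<in> space (P N). \<delta> < \<bar>sqrt N / b N * (S N x / Q N x - m)
             - 1 / (b N * sqrt N * k) * (S N x - m * Q N x)\<bar>}
        \<le> prob {x \<in> space (P N). \<eta> \<le> \<bar>S N x / N - p\<bar>} + prob {x \<in> space (P N). \<eta> \<le> \<bar>Q N x / N - k\<bar>}"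
      using ratio_linearization_deviation_le[OF S_meas[OF N] Q_meas[OF N] N k M b[of N] Q_pos[OF N] S_le[OF N],
          where p = p and \<eta> = \<eta>]
      unfolding error_le m[symmetric] .
    also have "\<dots> \<le> C1 * exp (- c1 * (real N * \<eta>\<^sup>2)) + C2 * exp (- c2 * (real N * \<eta>\<^sup>2))"
      by (intro add_mono S_tail Q_tail N \<eta>(1))
    also have "real N * \<eta>\<^sup>2 = d * (sqrt N * b N)"
    proof -
      have "real N * \<eta>\<^sup>2 = real N / sqrt N * (d * b N)" by (simp add: \<eta>(2))
      then show ?thesis by (simp add: real_div_sqrt)
    qed
    also have "C1 * exp (- c1 * (d * (sqrt N * b N))) + C2 * exp (- c2 * (d * (sqrt N * b N)))
        \<le> C1 * exp (- K * (sqrt N * b N)) + C2 * exp (- K * (sqrt N * b N))"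
      using C1 C2 by (intro add_mono mult_left_mono rate) auto
    also have "\<dots> \<le> (C1 + C2 + 1) * exp (- K * (sqrt N * b N))"
      by (simp add: distrib_right)
    finally show ?thesis .
  qed
  show ?thesis
    by (rule that[OF _ _ tail]) (use C1 C2 d in \<open>auto simp: K_def\<close>)
qed

lemma limsup_eln_div_sq_eq_minf:
  fixes P :: "nat \<Rightarrow> real" and b :: "nat \<Rightarrow> real"
  assumes b_pos: "\<And>N. b N > 0"
    and b_lim: "filterlim b at_top sequentially"
    and ratio_lim: "filterlim (\<lambda>N. sqrt (real N) / b N) at_top sequentially"
    and C: "C > 0" and K: "K > 0"
    and bound: "\<And>N. N > 0 \<Longrightarrow> P N \<le> C * exp (- K * (sqrt (real N) * b N))"
  shows "limsup (\<lambda>N. eln (P N) / ereal ((b N)\<^sup>2)) = -\<infinity>"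
proof -
  define g where "g N = ln C / (b N)\<^sup>2 - K * (sqrt (real N) / b N)" for N
  have le: "eventually (\<lambda>N. eln (P N) / ereal ((b N)\<^sup>2) \<le> ereal (g N)) sequentially"
    using eventually_gt_at_top[of 0]
  proof eventually_elim
    case (elim N)
    have b2: "(b N)\<^sup>2 > 0" using b_pos[of N] by simp
    show ?case
    proof (cases "P N > 0")
      case False
      then show ?thesis using b2 by (simp add: eln_def divide_ereal_def)
    next
      case True
      have "ln (P N) \<le> ln (C * exp (- K * (sqrt (real N) * b N)))"
        using True bound[OF elim] by (subst ln_le_cancel_iff) auto
      also have "\<dots> = ln C - K * (sqrt (real N) * b N)" using C by (simp add: ln_mult)
      finally have "ln (P N) / (b N)\<^sup>2 \<le> (ln C - K * (sqrt (real N) * b N)) / (b N)\<^sup>2"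
        using b2 by (intro divide_right_mono) auto
      also have "\<dots> = g N" unfolding g_def using b_pos[of N] by (simp add: field_simps power2_eq_square)
      finally show ?thesis using True b2 by (simp add: eln_def)
    qed
  qed
  have "filterlim g at_bot sequentially"
  proof -
    have vanishing: "(\<lambda>N. ln C / (b N)\<^sup>2) \<longlonglongrightarrow> 0"
      by (intro tendsto_divide_0[OF tendsto_const] filterlim_at_top_imp_at_infinity
          filterlim_pow_at_top[OF _ b_lim]) simp
    have diverging: "filterlim (\<lambda>N. K * (sqrt (real N) / b N)) at_top sequentially"
      by (rule filterlim_tendsto_pos_mult_at_top[OF tendsto_const K ratio_lim])
    have "filterlim (\<lambda>N. - (ln C / (b N)\<^sup>2) + K * (sqrt (real N) / b N)) at_top sequentially"
      by (rule filterlim_tendsto_add_at_top[OF tendsto_minus[OF vanishing] diverging])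
    then show ?thesis unfolding filterlim_uminus_at_bot g_def by simp
  qed
  then have "((\<lambda>N. ereal (g N)) \<longlongrightarrow> -\<infinity>) sequentially"
    using ereal_tendsto_simps2(3)[of g sequentially] by (simp add: comp_def)
  then have "limsup (\<lambda>N. ereal (g N)) = -\<infinity>"
    by (intro lim_imp_Limsup) simp_all
  then show ?thesis
    using Limsup_mono[OF le] by simp
qed

section \<open>The particle filter of a hidden Markov model\<close>

(* The last three assumptions are Assumption A-0. *)
locale hmm =
  fixes \<mu> :: "'a::euclidean_space measure" and \<nu> :: "'b measure"
    and a0 :: "'a \<Rightarrow> real" and a :: "nat \<Rightarrow> 'a \<Rightarrow> 'a \<Rightarrow> real"
    and b :: "nat \<Rightarrow> 'a \<Rightarrow> 'b \<Rightarrow> real" and y :: "nat \<Rightarrow> 'b"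
  assumes mu_sets: "sets \<mu> = sets borel" and mu_sf: "sigma_finite_measure \<mu>"
    and y_mem: "\<And>t. y t \<in> space \<nu>"
    and a0_meas: "a0 \<in> borel_measurable \<mu>" and a0_nn: "\<And>x. a0 x \<ge> 0"
    and a0_dens: "(\<integral>\<^sup>+x. ennreal (a0 x) \<partial>\<mu>) = 1"
    and a_meas: "\<And>t. (\<lambda>(x, x'). a t x x') \<in> borel_measurable (\<mu> \<Otimes>\<^sub>M \<mu>)"
    and a_nn: "\<And>t x x'. a t x x' \<ge> 0"
    and b_meas: "\<And>t. (\<lambda>(x, v). b t x v) \<in> borel_measurable (\<mu> \<Otimes>\<^sub>M \<nu>)"
    and b_nn: "\<And>t x v. b t x v \<ge> 0"
    and L_one_bdd: "\<And>t. t \<ge> 1 \<Longrightarrow> bdd_above (range (Lop \<mu> a b y t (\<lambda>_. 1)))"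
    and L_one_pos: "\<And>t x. t \<ge> 1 \<Longrightarrow> Lop \<mu> a b y t (\<lambda>_. 1) x > 0"
    and kappa_pos: "\<And>t. t \<ge> 1 \<Longrightarrow> kappa \<mu> a0 a b y t > 0"
begin

interpretation mu: sigma_finite_measure \<mu> by (rule mu_sf)

abbreviation L where "L \<equiv> Lop \<mu> a b y"
abbreviation m where "m \<equiv> mfilt \<mu> a0 a b y"
abbreviation f where "f \<equiv> filt \<mu> a0 a b y"
abbreviation \<kappa> where "\<kappa> \<equiv> kappa \<mu> a0 a b y"
abbreviation law where "law \<equiv> pf_law \<mu> a0 a b y"
abbreviation particles where "particles N \<equiv> PiM {..<N} (\<lambda>_::nat. \<mu>)"

lemma space_mu [simp]: "space \<mu> = UNIV"
  using sets_eq_imp_space_eq[OF mu_sets] by simp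

lemma borel_measurable_mu_iff: "g \<in> borel_measurable \<mu> \<longleftrightarrow> g \<in> borel_measurable borel"
  using measurable_cong_sets[OF mu_sets refl] by blast

lemma b_measurable_comp [measurable]:
  assumes "g \<in> M \<rightarrow>\<^sub>M \<mu>"
  shows "(\<lambda>z. b t (g z) (y t)) \<in> borel_measurable M"
proof -
  have "(\<lambda>z. (g z, y t)) \<in> M \<rightarrow>\<^sub>M \<mu> \<Otimes>\<^sub>M \<nu>"
    using assms y_mem by measurable
  from measurable_compose[OF this b_meas[of t]] show ?thesis by simp
qed

lemma a_measurable_comp [measurable]:
  assumes "g \<in> M \<rightarrow>\<^sub>M \<mu>" "h \<in> M \<rightarrow>\<^sub>M \<mu>"
  shows "(\<lambda>z. a t (g z) (h z)) \<in> borel_measurable M"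
proof -
  have "(\<lambda>z. (g z, h z)) \<in> M \<rightarrow>\<^sub>M \<mu> \<Otimes>\<^sub>M \<mu>"
    using assms by measurable
  from measurable_compose[OF this a_meas[of t]] show ?thesis by simp
qed

(* A non-integrable function has Bochner integral 0, so integrability is forced by L_t 1 > 0. *)
lemma integrable_kernel:
  assumes "t \<ge> 1"
  shows "integrable \<mu> (\<lambda>u. a t x u * b t u (y t))"
proof (rule ccontr)
  assume "\<not> ?thesis"
  then have "L t (\<lambda>_. 1) x = 0"
    unfolding Lop_def by (simp add: not_integrable_integral_eq)
  with L_one_pos[OF assms, of x] show False by simp
qed

lemma integrable_kernel_mult:
  assumes "t \<ge> 1" "\<phi> \<in> borel_measurable \<mu>" "\<And>x. \<bar>\<phi> x\<bar> \<le> M"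
  shows "integrable \<mu> (\<lambda>u. a t x u * b t u (y t) * \<phi> u)"
proof (rule Bochner_Integration.integrable_bound[OF integrable_mult_right[OF integrable_kernel[OF assms(1)]]])
  show "(\<lambda>u. a t x u * b t u (y t) * \<phi> u) \<in> borel_measurable \<mu>"
    using assms(2) by measurable
  show "AE u in \<mu>. norm (a t x u * b t u (y t) * \<phi> u) \<le> norm (M * (a t x u * b t u (y t)))"
  proof (intro AE_I2)
    fix u
    have "\<bar>a t x u * b t u (y t)\<bar> * \<bar>\<phi> u\<bar> \<le> \<bar>a t x u * b t u (y t)\<bar> * \<bar>M\<bar>"
      using assms(3)[of u] by (intro mult_left_mono) auto
    then show "norm (a t x u * b t u (y t) * \<phi> u) \<le> norm (M * (a t x u * b t u (y t)))"
      by (simp add: abs_mult mult_ac)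
  qed
qed

lemma abs_Lop_le:
  assumes "t \<ge> 1" "\<phi> \<in> borel_measurable \<mu>" "\<And>x. \<bar>\<phi> x\<bar> \<le> M"
  shows "\<bar>L t \<phi> x\<bar> \<le> M * L t (\<lambda>_. 1) x"
proof -
  have "\<bar>L t \<phi> x\<bar> \<le> (\<integral>u. M * (a t x u * b t u (y t)) \<partial>\<mu>)"
    unfolding Lop_def
  proof (rule integral_abs_bound_integral)
    show "integrable \<mu> (\<lambda>u. a t x u * b t u (y t) * \<phi> u)"
      by (rule integrable_kernel_mult[OF assms])
    show "integrable \<mu> (\<lambda>u. M * (a t x u * b t u (y t)))"
      using integrable_kernel[OF assms(1)] by simp
    show "\<bar>a t x u * b t u (y t) * \<phi> u\<bar> \<le> M * (a t x u * b t u (y t))" for u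
      using mult_left_mono[OF assms(3)[of u], of "a t x u * b t u (y t)"] a_nn b_nn
      by (simp add: abs_mult mult_ac)
  qed
  then show ?thesis by (simp add: Lop_def)
qed

lemma Lop_measurable [measurable]:
  assumes "\<phi> \<in> borel_measurable \<mu>"
  shows "L t \<phi> \<in> borel_measurable \<mu>"
proof -
  have "(\<lambda>(x, u). a t x u * b t u (y t) * \<phi> u) \<in> borel_measurable (\<mu> \<Otimes>\<^sub>M \<mu>)"
    using assms by measurable
  from mu.borel_measurable_lebesgue_integral[OF this] show ?thesis
    unfolding Lop_def[abs_def] by simp
qed

lemma Lop_measurable_comp [measurable]:
  assumes "\<phi> \<in> borel_measurable \<mu>" "g \<in> M \<rightarrow>\<^sub>M \<mu>"
  shows "(\<lambda>z. L t \<phi> (g z)) \<in> borel_measurable M"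
  using measurable_compose[OF assms(2) Lop_measurable[OF assms(1)]] by simp

lemma bounded_range_Lop:
  assumes "t \<ge> 1" "\<phi> \<in> borel_measurable \<mu>" "bounded (range \<phi>)"
  shows "bounded (range (L t \<phi>))"
proof -
  obtain M where M: "\<And>x. \<bar>\<phi> x\<bar> \<le> M"
    using assms(3) by (auto simp: bounded_iff)
  obtain B where B: "\<And>x. L t (\<lambda>_. 1) x \<le> B"
    using L_one_bdd[OF assms(1)] by (auto simp: bdd_above_def)
  have "\<bar>L t \<phi> x\<bar> \<le> \<bar>M\<bar> * B" for x
    using abs_Lop_le[OF assms(1,2) M, of x] mult_left_mono[OF B[of x], of M] M[of x] by linarith
  then show ?thesis
    by (auto simp: bounded_iff)
qed

lemma integrable_Lop_integrand:
  assumes t: "t \<ge> 1" and g: "g \<in> borel_measurable \<mu>" "\<And>u. g u \<ge> 0" "integrable \<mu> g"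
    and \<phi>: "\<phi> \<in> borel_measurable \<mu>" "\<And>x. \<bar>\<phi> x\<bar> \<le> M"
  shows "integrable (\<mu> \<Otimes>\<^sub>M \<mu>) (\<lambda>(u, x). g u * (a t u x * b t x (y t) * \<phi> x))"
proof -
  interpret P: pair_sigma_finite \<mu> \<mu> by (intro pair_sigma_finite.intro mu_sf)
  have abs_\<phi>: "(\<lambda>x. \<bar>\<phi> x\<bar>) \<in> borel_measurable \<mu>" "bounded (range (\<lambda>x. \<bar>\<phi> x\<bar>))"
    using \<phi> by (auto simp: bounded_iff)
  obtain B where B: "\<And>u. \<bar>L t (\<lambda>x. \<bar>\<phi> x\<bar>) u\<bar> \<le> B"
    using bounded_range_Lop[OF t abs_\<phi>] by (auto simp: bounded_iff)
  have "(\<integral>x. norm (g u * (a t u x * b t x (y t) * \<phi> x)) \<partial>\<mu>) = g u * L t (\<lambda>x. \<bar>\<phi> x\<bar>) u" for u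
    using g(2)[of u] a_nn b_nn by (simp add: Lop_def abs_mult)
  moreover have "integrable \<mu> (\<lambda>u. g u * L t (\<lambda>x. \<bar>\<phi> x\<bar>) u)"
  proof (rule Bochner_Integration.integrable_bound[OF integrable_mult_left[OF g(3), of B]])
    show "AE u in \<mu>. norm (g u * L t (\<lambda>x. \<bar>\<phi> x\<bar>) u) \<le> norm (g u * B)"
    proof (rule AE_I2)
      fix u
      have "\<bar>L t (\<lambda>x. \<bar>\<phi> x\<bar>) u\<bar> \<le> \<bar>B\<bar>" using B[of u] by linarith
      then show "norm (g u * L t (\<lambda>x. \<bar>\<phi> x\<bar>) u) \<le> norm (g u * B)"
        using g(2)[of u] by (simp add: abs_mult mult_left_mono)
    qed
  qed (use g abs_\<phi> in measurable)
  moreover have "AE u in \<mu>. integrable \<mu> (\<lambda>x. g u * (a t u x * b t x (y t) * \<phi> x))"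
    using integrable_kernel_mult[OF t \<phi>] by simp
  ultimately show ?thesis
    using g \<phi> by (intro P.Fubini_integrable) auto
qed

lemma Fubini_Lop:
  assumes t: "t \<ge> 1" and g: "g \<in> borel_measurable \<mu>" "\<And>u. g u \<ge> 0" "integrable \<mu> g"
    and \<phi>: "\<phi> \<in> borel_measurable \<mu>" "\<And>x. \<bar>\<phi> x\<bar> \<le> M"
  shows "integrable \<mu> (\<lambda>x. \<phi> x * (b t x (y t) * (\<integral>u. g u * a t u x \<partial>\<mu>)))"
    and "(\<integral>x. \<phi> x * (b t x (y t) * (\<integral>u. g u * a t u x \<partial>\<mu>)) \<partial>\<mu>) = (\<integral>u. g u * L t \<phi> u \<partial>\<mu>)"
proof -
  interpret P: pair_sigma_finite \<mu> \<mu> by (intro pair_sigma_finite.intro mu_sf)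
  note F_int = integrable_Lop_integrand[OF t g \<phi>]
  have outer: "(\<integral>u. g u * (a t u x * b t x (y t) * \<phi> x) \<partial>\<mu>)
      = \<phi> x * (b t x (y t) * (\<integral>u. g u * a t u x \<partial>\<mu>))" for x
  proof -
    have "(\<lambda>u. g u * (a t u x * b t x (y t) * \<phi> x)) = (\<lambda>u. (\<phi> x * b t x (y t)) * (g u * a t u x))"
      by (auto simp: mult_ac)
    then show ?thesis by simp
  qed
  show "integrable \<mu> (\<lambda>x. \<phi> x * (b t x (y t) * (\<integral>u. g u * a t u x \<partial>\<mu>)))"
    using P.integrable_snd[OF F_int] by (simp add: outer)
  show "(\<integral>x. \<phi> x * (b t x (y t) * (\<integral>u. g u * a t u x \<partial>\<mu>)) \<partial>\<mu>) = (\<integral>u. g u * L t \<phi> u \<partial>\<mu>)"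
    using P.Fubini_integral[OF F_int] by (simp add: outer Lop_def)
qed

lemma filt_measurable_nonneg_integrable:
  "f t \<in> borel_measurable \<mu> \<and> (\<forall>x. f t x \<ge> 0) \<and> integrable \<mu> (f t)"
proof (induction t)
  case 0
  have "integrable \<mu> a0"
    by (rule integrableI_nn_integral_finite[OF a0_meas]) (auto simp: a0_nn a0_dens)
  then show ?case using a0_meas a0_nn by simp
next
  case (Suc t)
  then have [measurable]: "f t \<in> borel_measurable \<mu>" by blast
  define Z where "Z = (\<integral>x'. b (Suc t) x' (y (Suc t)) * (\<integral>u. f t u * a (Suc t) u x' \<partial>\<mu>) \<partial>\<mu>)"
  have f_Suc: "f (Suc t) = (\<lambda>x. b (Suc t) x (y (Suc t)) * (\<integral>u. f t u * a (Suc t) u x \<partial>\<mu>) / Z)"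
    by (simp add: Z_def)
  have "(\<lambda>(x, u). f t u * a (Suc t) u x) \<in> borel_measurable (\<mu> \<Otimes>\<^sub>M \<mu>)"
    by measurable
  from mu.borel_measurable_lebesgue_integral[OF this]
  have "f (Suc t) \<in> borel_measurable \<mu>"
    unfolding f_Suc by measurable
  moreover have "f (Suc t) x \<ge> 0" for x
  proof -
    have "Z \<ge> 0" unfolding Z_def using Suc a_nn b_nn
      by (intro integral_nonneg_AE AE_I2 mult_nonneg_nonneg) auto
    then show ?thesis
      unfolding f_Suc using Suc a_nn b_nn by (intro divide_nonneg_nonneg mult_nonneg_nonneg integral_nonneg_AE) auto
  qed
  moreover have "integrable \<mu> (f (Suc t))"
    using Fubini_Lop(1)[of "Suc t" "f t" "\<lambda>_. 1" 1] Suc unfolding f_Suc by simp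
  ultimately show ?case by blast
qed

lemma filt_measurable [measurable]: "f t \<in> borel_measurable \<mu>"
  and filt_nonneg: "f t x \<ge> 0"
  and integrable_filt: "integrable \<mu> (f t)"
  using filt_measurable_nonneg_integrable by blast+

lemma kappa_Suc: "\<kappa> (Suc t) = m t (L (Suc t) (\<lambda>_. 1))"
  unfolding kappa_def mfilt_def by (simp add: mult.commute)

lemma mfilt_Suc:
  assumes \<phi>: "\<phi> \<in> borel_measurable \<mu>" "\<And>x. \<bar>\<phi> x\<bar> \<le> M"
  shows "m (Suc t) \<phi> = m t (L (Suc t) \<phi>) / \<kappa> (Suc t)"
proof -
  define Z where "Z = (\<integral>x'. b (Suc t) x' (y (Suc t)) * (\<integral>u. f t u * a (Suc t) u x' \<partial>\<mu>) \<partial>\<mu>)"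
  have Fubini: "(\<integral>x. \<psi> x * (b (Suc t) x (y (Suc t)) * (\<integral>u. f t u * a (Suc t) u x \<partial>\<mu>)) \<partial>\<mu>)
      = m t (L (Suc t) \<psi>)" if "\<psi> \<in> borel_measurable \<mu>" "\<And>x. \<bar>\<psi> x\<bar> \<le> B" for \<psi> B
    using Fubini_Lop(2)[OF _ filt_measurable filt_nonneg integrable_filt that] by (simp add: mfilt_def mult.commute)
  have "Z = \<kappa> (Suc t)"
    using Fubini[of "\<lambda>_. 1" 1] by (simp add: Z_def kappa_Suc)
  have "m (Suc t) \<phi> = (\<integral>x. \<phi> x * (b (Suc t) x (y (Suc t)) * (\<integral>u. f t u * a (Suc t) u x \<partial>\<mu>)) / Z \<partial>\<mu>)"
    by (simp add: mfilt_def Z_def mult_ac)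
  also have "\<dots> = m t (L (Suc t) \<phi>) / Z"
    using Fubini[OF \<phi>] by simp
  finally show ?thesis using \<open>Z = \<kappa> (Suc t)\<close> by simp
qed

lemma sum_Lop_one_pos:
  fixes xs :: "nat \<Rightarrow> 'a"
  shows "t \<ge> 1 \<Longrightarrow> N > 0 \<Longrightarrow> (\<Sum>i<N. L t (\<lambda>_. 1) (xs i)) > 0"
  by (intro sum_pos finite_lessThan) (auto simp: L_one_pos)

lemma pf_dens_eq:
  assumes t: "t \<ge> 1" and N: "N > 0"
  shows "pf_dens \<mu> a b y N t xs x
       = (\<Sum>i<N. a t (xs i) x * b t x (y t)) / (\<Sum>i<N. L t (\<lambda>_. 1) (xs i))"
proof -
  have "(\<lambda>x'. b t x' (y t) * ((\<Sum>i<N. a t (xs i) x') / real N))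
      = (\<lambda>x'. (1 / real N) * (\<Sum>i<N. a t (xs i) x' * b t x' (y t)))"
    by (rule ext) (simp add: sum_distrib_left sum_distrib_right sum_divide_distrib mult_ac)
  then have "(\<integral>x'. b t x' (y t) * ((\<Sum>i<N. a t (xs i) x') / real N) \<partial>\<mu>)
      = (\<Sum>i<N. L t (\<lambda>_. 1) (xs i)) / real N"
    using integrable_kernel[OF t] by (simp add: integral_sum Lop_def)
  then have "pf_dens \<mu> a b y N t xs x = b t x (y t) * (\<Sum>i<N. a t (xs i) x) / (\<Sum>i<N. L t (\<lambda>_. 1) (xs i))"
    unfolding pf_dens_def using N by (simp add: field_simps)
  then show ?thesis
    by (simp add: sum_distrib_left mult_ac)
qed

lemma pf_dens_nonneg: "pf_dens \<mu> a b y N t xs x \<ge> 0"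
  unfolding pf_dens_def using a_nn b_nn
  by (intro divide_nonneg_nonneg mult_nonneg_nonneg sum_nonneg integral_nonneg_AE AE_I2) auto

lemma pf_dens_measurable:
  assumes "t \<ge> 1" "N > 0"
  shows "(\<lambda>(xs, x). pf_dens \<mu> a b y N t xs x) \<in> borel_measurable (particles N \<Otimes>\<^sub>M \<mu>)"
  unfolding pf_dens_eq[OF assms] by measurable

lemma pf_dens_measurable_slice [measurable]:
  assumes "t \<ge> 1" "N > 0"
  shows "pf_dens \<mu> a b y N t xs \<in> borel_measurable \<mu>"
  unfolding pf_dens_eq[OF assms, abs_def] by measurable

lemma integrable_pf_dens:
  assumes t: "t \<ge> 1" and N: "N > 0"
  shows "integrable \<mu> (pf_dens \<mu> a b y N t xs)"
proof -
  have "pf_dens \<mu> a b y N t xs = (\<lambda>x. (\<Sum>i<N. a t (xs i) x * b t x (y t)) / (\<Sum>i<N. L t (\<lambda>_. 1) (xs i)))"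
    by (rule ext) (rule pf_dens_eq[OF t N])
  then show ?thesis
    using integrable_kernel[OF t] by simp
qed

lemma integral_pf_dens_mult:
  assumes t: "t \<ge> 1" and N: "N > 0" and \<phi>: "\<phi> \<in> borel_measurable \<mu>" "\<And>x. \<bar>\<phi> x\<bar> \<le> M"
  shows "(\<integral>x. pf_dens \<mu> a b y N t xs x * \<phi> x \<partial>\<mu>)
       = empirical_mean N (L t \<phi>) xs / empirical_mean N (L t (\<lambda>_. 1)) xs"
proof -
  have "(\<integral>x. pf_dens \<mu> a b y N t xs x * \<phi> x \<partial>\<mu>)
      = (\<integral>x. (\<Sum>i<N. a t (xs i) x * b t x (y t) * \<phi> x) / (\<Sum>i<N. L t (\<lambda>_. 1) (xs i)) \<partial>\<mu>)"
    by (simp add: pf_dens_eq[OF t N] sum_distrib_right)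
  also have "\<dots> = (\<Sum>i<N. L t \<phi> (xs i)) / (\<Sum>i<N. L t (\<lambda>_. 1) (xs i))"
    using integrable_kernel_mult[OF t \<phi>] by (simp add: integral_sum Lop_def)
  finally show ?thesis
    using N by (simp add: empirical_mean_def)
qed

lemma prob_space_pf_dens:
  assumes t: "t \<ge> 1" and N: "N > 0"
  shows "prob_space (density \<mu> (\<lambda>x. ennreal (pf_dens \<mu> a b y N t xs x)))"
proof (rule prob_spaceI)
  have "(\<integral>x. pf_dens \<mu> a b y N t xs x \<partial>\<mu>) = 1"
    using integral_pf_dens_mult[OF t N, of "\<lambda>_. 1" 1 xs] sum_Lop_one_pos[OF t N, of xs] N
    by (simp add: empirical_mean_def)
  then have "(\<integral>\<^sup>+x. ennreal (pf_dens \<mu> a b y N t xs x) \<partial>\<mu>) = 1"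
    using integrable_pf_dens[OF t N] by (simp add: nn_integral_eq_integral pf_dens_nonneg)
  then show "emeasure (density \<mu> (\<lambda>x. ennreal (pf_dens \<mu> a b y N t xs x)))
      (space (density \<mu> (\<lambda>x. ennreal (pf_dens \<mu> a b y N t xs x)))) = 1"
    using pf_dens_measurable_slice[OF t N] sets.top[of \<mu>] by (simp add: emeasure_density)
qed

definition pf_kernel :: "nat \<Rightarrow> nat \<Rightarrow> (nat \<Rightarrow> 'a) \<Rightarrow> (nat \<Rightarrow> 'a) measure" where
  "pf_kernel N t xs = PiM {..<N} (\<lambda>_. density \<mu> (\<lambda>x. ennreal (pf_dens \<mu> a b y N t xs x)))"

lemma sets_pf_kernel: "sets (pf_kernel N t xs) = sets (particles N)"
  unfolding pf_kernel_def by (rule sets_PiM_cong) auto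

lemma prob_space_pf_kernel: "t \<ge> 1 \<Longrightarrow> N > 0 \<Longrightarrow> prob_space (pf_kernel N t xs)"
  unfolding pf_kernel_def by (rule prob_space_PiM) (rule prob_space_pf_dens)

lemma pf_kernel_measurable:
  assumes t: "t \<ge> 1" and N: "N > 0"
  shows "pf_kernel N t \<in> particles N \<rightarrow>\<^sub>M prob_algebra (particles N)"
proof (rule measurable_prob_algebra_generated[OF sets_PiM Int_stable_prod_algebra prod_algebra_sets_into_space])
  show "prob_space (pf_kernel N t xs)" for xs by (rule prob_space_pf_kernel[OF t N])
  show "sets (pf_kernel N t xs) = sets (particles N)" for xs by (rule sets_pf_kernel)
  fix A assume "A \<in> prod_algebra {..<N} (\<lambda>_. \<mu>)"
  then obtain J E where A: "A = prod_emb {..<N} (\<lambda>_. \<mu>) J (Pi\<^sub>E J E)" "finite J" "J \<subseteq> {..<N}"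
      "\<And>i. i \<in> J \<Longrightarrow> E i \<in> sets \<mu>"
    by (rule prod_algebraE) auto
  define D where "D xs = density \<mu> (\<lambda>x. ennreal (pf_dens \<mu> a b y N t xs x))" for xs
  have emb: "prod_emb {..<N} (\<lambda>_. \<mu>) J (Pi\<^sub>E J E) = prod_emb {..<N} (\<lambda>_. D xs) J (Pi\<^sub>E J E)" for xs
    by (simp add: prod_emb_def D_def)
  have box: "emeasure (pf_kernel N t xs) A = (\<Prod>j\<in>J. emeasure (D xs) (E j))" for xs
    unfolding A(1) emb[of xs] pf_kernel_def D_def[symmetric]
    by (rule emeasure_PiM_emb) (use A prob_space_pf_dens[OF t N] in \<open>auto simp: D_def\<close>)
  have "(\<lambda>xs. emeasure (D xs) (E j)) \<in> borel_measurable (particles N)" if "j \<in> J" for j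
  proof -
    have "emeasure (D xs) (E j) = (\<integral>\<^sup>+x. ennreal (pf_dens \<mu> a b y N t xs x) * indicator (E j) x \<partial>\<mu>)" for xs
      unfolding D_def using A(4)[OF that] pf_dens_measurable_slice[OF t N] by (simp add: emeasure_density)
    moreover have "(\<lambda>xs. \<integral>\<^sup>+x. ennreal (pf_dens \<mu> a b y N t xs x) * indicator (E j) x \<partial>\<mu>)
        \<in> borel_measurable (particles N)"
      using pf_dens_measurable[OF t N] A(4)[OF that] by measurable
    ultimately show ?thesis by simp
  qed
  then show "(\<lambda>xs. emeasure (pf_kernel N t xs) A) \<in> borel_measurable (particles N)"
    unfolding box by (intro borel_measurable_prod_ennreal) auto
qed

lemma pf_law_Suc: "law N (Suc t) = law N t \<bind> pf_kernel N (Suc t)"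
  by (simp add: pf_kernel_def[abs_def])

lemma prob_space_initial: "prob_space (density \<mu> (\<lambda>x. ennreal (a0 x)))"
proof (rule prob_spaceI)
  have "emeasure (density \<mu> (\<lambda>x. ennreal (a0 x))) UNIV = (\<integral>\<^sup>+x. ennreal (a0 x) * indicator UNIV x \<partial>\<mu>)"
    by (rule emeasure_density) (use a0_meas sets.top[of \<mu>] in auto)
  then show "emeasure (density \<mu> (\<lambda>x. ennreal (a0 x))) (space (density \<mu> (\<lambda>x. ennreal (a0 x)))) = 1"
    using a0_dens by simp
qed

lemma prob_space_pf_law_and_sets:
  assumes N: "N > 0"
  shows "prob_space (law N t) \<and> sets (law N t) = sets (particles N)"
proof (induction t)
  case 0
  show ?case using prob_space_initial by (auto intro!: prob_space_PiM sets_PiM_cong)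
next
  case (Suc t)
  then have "law N t \<in> space (prob_algebra (particles N))"
    by (simp add: space_prob_algebra)
  moreover have "pf_kernel N (Suc t) \<in> particles N \<rightarrow>\<^sub>M prob_algebra (particles N)"
    by (rule pf_kernel_measurable) (use N in auto)
  ultimately show ?case
    unfolding pf_law_Suc using prob_space_bind' sets_bind' by blast
qed

lemma prob_space_pf_law: "N > 0 \<Longrightarrow> prob_space (law N t)"
  and sets_pf_law: "N > 0 \<Longrightarrow> sets (law N t) = sets (particles N)"
  using prob_space_pf_law_and_sets by blast+

lemma empirical_mean_measurable_pf_law:
  assumes "N > 0" "\<phi> \<in> borel_measurable \<mu>"
  shows "empirical_mean N \<phi> \<in> borel_measurable (law N t)"
  using measurable_cong_sets[OF sets_pf_law[OF assms(1)] refl] borel_measurable_empirical_mean[OF assms(2)]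
  by blast

lemma pf_kernel_deviation_le:
  assumes t: "t \<ge> 1" and N: "N > 0" and \<epsilon>: "\<epsilon> \<ge> 0"
    and \<phi>: "\<phi> \<in> borel_measurable \<mu>" "\<And>x. \<bar>\<phi> x\<bar> \<le> M" and M: "M > 0"
  shows "measure (pf_kernel N t xs) {zs \<in> space (particles N).
           \<epsilon> \<le> \<bar>empirical_mean N \<phi> zs - empirical_mean N (L t \<phi>) xs / empirical_mean N (L t (\<lambda>_. 1)) xs\<bar>}
         \<le> 2 * exp (- real N * \<epsilon>\<^sup>2 / (2 * M\<^sup>2))"
proof -
  define Q where "Q = density \<mu> (\<lambda>x. ennreal (pf_dens \<mu> a b y N t xs x))"
  have Q: "prob_space Q" unfolding Q_def by (rule prob_space_pf_dens[OF t N])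
  have \<phi>_Q: "\<phi> \<in> borel_measurable Q"
    using \<phi>(1) by (simp add: Q_def)
  have "(\<integral>x. \<phi> x \<partial>Q) = (\<integral>x. pf_dens \<mu> a b y N t xs x * \<phi> x \<partial>\<mu>)"
    unfolding Q_def using \<phi>(1) pf_dens_measurable_slice[OF t N] pf_dens_nonneg
    by (subst integral_density) auto
  also have "\<dots> = empirical_mean N (L t \<phi>) xs / empirical_mean N (L t (\<lambda>_. 1)) xs"
    by (rule integral_pf_dens_mult[OF t N \<phi>])
  finally have "(\<integral>x. \<phi> x \<partial>Q) = empirical_mean N (L t \<phi>) xs / empirical_mean N (L t (\<lambda>_. 1)) xs" .
  moreover have "space (PiM {..<N} (\<lambda>_. Q)) = space (particles N)"
    by (simp add: space_PiM Q_def)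
  ultimately show ?thesis
    using Hoeffding_empirical_mean[OF Q \<phi>_Q \<phi>(2) M N \<epsilon>] by (simp add: pf_kernel_def Q_def)
qed

lemma pf_law_Suc_deviation_le:
  assumes N: "N > 0" and \<epsilon>: "\<epsilon> > 0"
    and \<phi>: "\<phi> \<in> borel_measurable \<mu>" "\<And>x. \<bar>\<phi> x\<bar> \<le> M" and M: "M > 0"
  shows "measure (law N (Suc t)) {zs \<in> space (law N (Suc t)). \<epsilon> \<le> \<bar>empirical_mean N \<phi> zs - v\<bar>}
     \<le> 2 * exp (- (1 / (8 * M\<^sup>2)) * (real N * \<epsilon>\<^sup>2))
       + measure (law N t) {xs \<in> space (law N t). \<epsilon> / 2 \<le>
           \<bar>empirical_mean N (L (Suc t) \<phi>) xs / empirical_mean N (L (Suc t) (\<lambda>_. 1)) xs - v\<bar>}"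
proof -
  have t: "Suc t \<ge> 1" by simp
  define ratio where
    "ratio xs = empirical_mean N (L (Suc t) \<phi>) xs / empirical_mean N (L (Suc t) (\<lambda>_. 1)) xs" for xs
  define A where "A = {zs \<in> space (particles N). \<epsilon> \<le> \<bar>empirical_mean N \<phi> zs - v\<bar>}"
  define B where "B = {xs \<in> space (law N t). \<epsilon> / 2 \<le> \<bar>ratio xs - v\<bar>}"
  define h where "h = 2 * exp (- (1 / (8 * M\<^sup>2)) * (real N * \<epsilon>\<^sup>2))"
  have "measure (law N t \<bind> pf_kernel N (Suc t)) A \<le> h + measure (law N t) B"
  proof (rule measure_bind_le)
    show "prob_space (law N t)" by (rule prob_space_pf_law[OF N])
    show "pf_kernel N (Suc t) \<in> law N t \<rightarrow>\<^sub>M prob_algebra (particles N)"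
      using pf_kernel_measurable[OF t N] measurable_cong_sets[OF sets_pf_law[OF N] refl] by blast
    show "A \<in> sets (particles N)"
      unfolding A_def by (intro deviation_set_sets borel_measurable_empirical_mean \<phi>(1))
    show "B \<in> sets (law N t)"
      unfolding B_def ratio_def by (intro deviation_set_sets borel_measurable_divide
          empirical_mean_measurable_pf_law N \<phi>(1) Lop_measurable) simp
    show "h \<ge> 0" by (simp add: h_def)
    fix xs assume "xs \<notin> B" "xs \<in> space (law N t)"
    then have "\<bar>ratio xs - v\<bar> < \<epsilon> / 2" by (auto simp: B_def)
    then have "\<epsilon> / 2 \<le> \<bar>e - ratio xs\<bar>" if "\<epsilon> \<le> \<bar>e - v\<bar>" for e
      using that by linarith
    then have "A \<subseteq> {zs \<in> space (particles N). \<epsilon> / 2 \<le> \<bar>empirical_mean N \<phi> zs - ratio xs\<bar>}"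
      by (auto simp: A_def)
    moreover interpret K: prob_space "pf_kernel N (Suc t) xs"
      by (rule prob_space_pf_kernel[OF t N])
    have "{zs \<in> space (particles N). \<epsilon> / 2 \<le> \<bar>empirical_mean N \<phi> zs - ratio xs\<bar>} \<in> K.events"
      unfolding sets_pf_kernel by (intro deviation_set_sets borel_measurable_empirical_mean \<phi>(1))
    ultimately have "measure (pf_kernel N (Suc t) xs) A
        \<le> measure (pf_kernel N (Suc t) xs) {zs \<in> space (particles N). \<epsilon> / 2 \<le> \<bar>empirical_mean N \<phi> zs - ratio xs\<bar>}"
      by (rule K.finite_measure_mono)
    also have "\<dots> \<le> 2 * exp (- real N * (\<epsilon> / 2)\<^sup>2 / (2 * M\<^sup>2))"
      unfolding ratio_def using \<epsilon> by (intro pf_kernel_deviation_le[OF t N _ \<phi> M]) simp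
    also have "\<dots> = h"
      by (simp add: h_def power2_eq_square field_simps)
    finally show "measure (pf_kernel N (Suc t) xs) A \<le> h" .
  qed
  moreover have "{zs \<in> space (law N (Suc t)). \<epsilon> \<le> \<bar>empirical_mean N \<phi> zs - v\<bar>} = A"
    unfolding A_def sets_eq_imp_space_eq[OF sets_pf_law[OF N]] ..
  ultimately show ?thesis
    unfolding pf_law_Suc h_def B_def ratio_def by (simp del: pf_law.simps)
qed

lemma empirical_mean_exp_concentrated_0:
  assumes \<phi>: "\<phi> \<in> borel_measurable \<mu>" "bounded (range \<phi>)"
  shows "exp_concentrated (\<lambda>N. law N 0) (\<lambda>N. empirical_mean N \<phi>) (m 0 \<phi>)"
proof -
  obtain M where M: "M > 0" "\<And>x. \<bar>\<phi> x\<bar> \<le> M"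
    using \<phi>(2) by (auto simp: bounded_pos)
  define Q where "Q = density \<mu> (\<lambda>x. ennreal (a0 x))"
  have Q: "prob_space Q"
    unfolding Q_def by (rule prob_space_initial)
  have \<phi>_Q: "\<phi> \<in> borel_measurable Q"
    using \<phi>(1) by (simp add: Q_def)
  have mean: "(\<integral>x. \<phi> x \<partial>Q) = m 0 \<phi>"
    unfolding Q_def mfilt_def using \<phi>(1) a0_meas a0_nn
    by (subst integral_density) (auto simp: mult.commute)
  show ?thesis
  proof (rule exp_concentratedI)
    show "(2::real) \<ge> 0" "1 / (2 * M\<^sup>2) > 0" using M(1) by auto
    fix N :: nat and \<epsilon> :: real assume "N > 0" "\<epsilon> > 0"
    then show "measure (law N 0) {xs \<in> space (law N 0). \<epsilon> \<le> \<bar>empirical_mean N \<phi> xs - m 0 \<phi>\<bar>}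
        \<le> 2 * exp (- (1 / (2 * M\<^sup>2)) * (real N * \<epsilon>\<^sup>2))"
      using Hoeffding_empirical_mean[OF Q \<phi>_Q M(2,1), of N \<epsilon>] unfolding mean by (simp add: Q_def)
  qed
qed

lemma empirical_mean_exp_concentrated_Suc:
  assumes IH: "\<And>\<phi>. \<phi> \<in> borel_measurable \<mu> \<Longrightarrow> bounded (range \<phi>) \<Longrightarrow>
      exp_concentrated (\<lambda>N. law N t) (\<lambda>N. empirical_mean N \<phi>) (m t \<phi>)"
    and \<phi>: "\<phi> \<in> borel_measurable \<mu>" "bounded (range \<phi>)"
  shows "exp_concentrated (\<lambda>N. law N (Suc t)) (\<lambda>N. empirical_mean N \<phi>) (m (Suc t) \<phi>)"
proof -
  obtain M where M: "M > 0" "\<And>x. \<bar>\<phi> x\<bar> \<le> M"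
    using \<phi>(2) by (auto simp: bounded_pos)
  have t: "Suc t \<ge> 1" by simp
  let ?\<Phi> = "L (Suc t) \<phi>" and ?O = "L (Suc t) (\<lambda>_. 1)"
  have \<Phi>: "?\<Phi> \<in> borel_measurable \<mu>" "bounded (range ?\<Phi>)"
    using \<phi> bounded_range_Lop[OF t] by auto
  have O: "?O \<in> borel_measurable \<mu>" "bounded (range ?O)"
    using bounded_range_Lop[OF t, of "\<lambda>_. 1"] by auto
  have "m t ?\<Phi> / m t ?O = m (Suc t) \<phi>"
    using mfilt_Suc[OF \<phi>(1) M(2)] by (simp add: kappa_Suc)
  moreover have "exp_concentrated (\<lambda>N. law N t)
      (\<lambda>N xs. empirical_mean N ?\<Phi> xs / empirical_mean N ?O xs) (m t ?\<Phi> / m t ?O)"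
  proof (rule exp_concentrated_ratio[OF prob_space_pf_law empirical_mean_measurable_pf_law[OF _ \<Phi>(1)]
        empirical_mean_measurable_pf_law[OF _ O(1)] IH[OF \<Phi>] IH[OF O] _ M(1)])
    show "m t ?O > 0" using kappa_pos[OF t] by (simp add: kappa_Suc)
    show "empirical_mean N ?O xs > 0" if "N > 0" for N xs
      using sum_Lop_one_pos[OF t that] that by (simp add: empirical_mean_def)
    show "\<bar>empirical_mean N ?\<Phi> xs\<bar> \<le> M * empirical_mean N ?O xs" if "N > 0" for N xs
    proof -
      have "\<bar>\<Sum>i<N. ?\<Phi> (xs i)\<bar> \<le> (\<Sum>i<N. M * ?O (xs i))"
        using abs_Lop_le[OF t \<phi>(1) M(2)] by (intro order_trans[OF sum_abs sum_mono])
      then show ?thesis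
        by (simp add: empirical_mean_def abs_divide sum_distrib_left divide_right_mono)
    qed
  qed
  ultimately have "exp_concentrated (\<lambda>N. law N t)
      (\<lambda>N xs. empirical_mean N ?\<Phi> xs / empirical_mean N ?O xs) (m (Suc t) \<phi>)"
    by simp
  then show ?thesis
    by (rule exp_concentrated_of_step_bound[OF _ _ _ pf_law_Suc_deviation_le[OF _ _ \<phi>(1) M(2,1)]])
      (use M(1) in auto)
qed

theorem empirical_mean_exp_concentrated:
  "\<phi> \<in> borel_measurable \<mu> \<Longrightarrow> bounded (range \<phi>) \<Longrightarrow>
    exp_concentrated (\<lambda>N. law N t) (\<lambda>N. empirical_mean N \<phi>) (m t \<phi>)"
proof (induction t arbitrary: \<phi>)
  case 0
  then show ?case by (rule empirical_mean_exp_concentrated_0)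
next
  case (Suc t)
  then show ?case by (rule empirical_mean_exp_concentrated_Suc)
qed

lemma pf_linearization_tail:
  assumes \<psi>: "\<psi> \<in> borel_measurable \<mu>" "bounded (range \<psi>)"
    and bN: "\<And>N. bN N > 0" and \<delta>: "\<delta> > 0"
  obtains C K where "C > 0" "K > 0"
    "\<And>N. N > 0 \<Longrightarrow> measure (law N t) {xs \<in> space (law N t).
        \<bar>sqrt (real N) / bN N *
            ((\<Sum>i<N. L (Suc t) \<psi> (xs i)) / (\<Sum>i<N. L (Suc t) (\<lambda>_. 1) (xs i)) - m (Suc t) \<psi>)
          - 1 / (bN N * sqrt (real N) * \<kappa> (Suc t)) *
            ((\<Sum>i<N. L (Suc t) \<psi> (xs i)) - m (Suc t) \<psi> * (\<Sum>i<N. L (Suc t) (\<lambda>_. 1) (xs i)))\<bar> > \<delta>}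
      \<le> C * exp (- K * (sqrt (real N) * bN N))"
proof -
  have t: "Suc t \<ge> 1" by simp
  obtain M where M: "M > 0" "\<And>x. \<bar>\<psi> x\<bar> \<le> M"
    using \<psi>(2) by (auto simp: bounded_pos)
  have sum_meas: "(\<lambda>xs. \<Sum>i<N. L (Suc t) \<phi> (xs i)) \<in> borel_measurable (law N t)"
    if "N > 0" "\<phi> \<in> borel_measurable \<mu>" for N \<phi>
    unfolding measurable_cong_sets[OF sets_pf_law[OF that(1)] refl] using that(2) by measurable
  have mean_conc: "exp_concentrated (\<lambda>N. law N t)
      (\<lambda>N xs. (\<Sum>i<N. L (Suc t) \<phi> (xs i)) / real N) (m t (L (Suc t) \<phi>))"
    if "\<phi> \<in> borel_measurable \<mu>" "bounded (range \<phi>)" for \<phi>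
    using empirical_mean_exp_concentrated[OF Lop_measurable[OF that(1)] bounded_range_Lop[OF t that]]
    by (simp add: empirical_mean_def[abs_def])
  have kappa_conc: "exp_concentrated (\<lambda>N. law N t)
      (\<lambda>N xs. (\<Sum>i<N. L (Suc t) (\<lambda>_. 1) (xs i)) / real N) (\<kappa> (Suc t))"
    unfolding kappa_Suc by (rule mean_conc) auto
  have sum_le: "\<bar>\<Sum>i<N. L (Suc t) \<psi> (xs i)\<bar> \<le> M * (\<Sum>i<N. L (Suc t) (\<lambda>_. 1) (xs i))"
    if "N > 0" for N :: nat and xs
    using abs_Lop_le[OF t \<psi>(1) M(2)] by (simp add: sum_distrib_left order_trans[OF sum_abs sum_mono])
  show ?thesis
    using prob_space_pf_law sum_meas[OF _ \<psi>(1)] sum_meas[OF _ borel_measurable_const] mean_conc[OF \<psi>]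
      kappa_conc kappa_pos[OF t] less_imp_le[OF M(1)] sum_Lop_one_pos[OF t] sum_le bN \<delta>
      mfilt_Suc[OF \<psi>(1) M(2)] that
    by (rule ratio_linearization_tail)
qed
end

theorem lemma3p2:
  fixes \<mu> :: "'a::euclidean_space measure" and \<nu> :: "'b measure"
    and a0 :: "'a \<Rightarrow> real" and a :: "nat \<Rightarrow> 'a \<Rightarrow> 'a \<Rightarrow> real"
    and b :: "nat \<Rightarrow> 'a \<Rightarrow> 'b \<Rightarrow> real" and y :: "nat \<Rightarrow> 'b"
    and T :: nat and \<psi> :: "'a \<Rightarrow> real" and bN :: "nat \<Rightarrow> real" and \<delta> :: real
  assumes mu_sets: "sets \<mu> = sets borel" and mu_sf: "sigma_finite_measure \<mu>"
    and y_mem: "\<And>t. y t \<in> space \<nu>"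
    and a0_meas: "a0 \<in> borel_measurable \<mu>" and a0_nn: "\<And>x. a0 x \<ge> 0"
    and a0_dens: "(\<integral>\<^sup>+x. ennreal (a0 x) \<partial>\<mu>) = 1"
    and a_meas: "\<And>t. (\<lambda>(x, x'). a t x x') \<in> borel_measurable (\<mu> \<Otimes>\<^sub>M \<mu>)"
    and a_nn: "\<And>t x x'. a t x x' \<ge> 0"
    and a_dens: "\<And>t x. (\<integral>\<^sup>+x'. ennreal (a t x x') \<partial>\<mu>) = 1"
    and b_meas: "\<And>t. (\<lambda>(x, v). b t x v) \<in> borel_measurable (\<mu> \<Otimes>\<^sub>M \<nu>)"
    and b_nn: "\<And>t x v. b t x v \<ge> 0"
    and b_dens: "\<And>t x. (\<integral>\<^sup>+v. ennreal (b t x v) \<partial>\<nu>) = 1"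
    and A0_bdd: "\<And>t. t \<ge> 1 \<Longrightarrow> bdd_above (range (Lop \<mu> a b y t (\<lambda>_. 1)))"
    and A0_pos: "\<And>t x. t \<ge> 1 \<Longrightarrow> Lop \<mu> a b y t (\<lambda>_. 1) x > 0"
    and A0_kappa: "\<And>t. t \<ge> 1 \<Longrightarrow> kappa \<mu> a0 a b y t > 0"
    and T_ge: "T \<ge> 1"
    and psi_meas: "\<psi> \<in> borel_measurable borel" and psi_bdd: "bounded (range \<psi>)"
    and bN_pos: "\<And>N. bN N > 0"
    and bN_lim: "filterlim bN at_top sequentially"
    and bN_lim2: "filterlim (\<lambda>N. sqrt (real N) / bN N) at_top sequentially"
    and delta_pos: "\<delta> > 0"
  shows "limsup (\<lambda>N. eln (measure (pf_law \<mu> a0 a b y N (T - 1))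
            {xs \<in> space (pf_law \<mu> a0 a b y N (T - 1)).
               \<bar> sqrt (real N) / bN N *
                   ((\<Sum>i<N. Lop \<mu> a b y T \<psi> (xs i)) / (\<Sum>i<N. Lop \<mu> a b y T (\<lambda>_. 1) (xs i))
                    - mfilt \<mu> a0 a b y T \<psi>)
                 - 1 / (bN N * sqrt (real N) * kappa \<mu> a0 a b y T) *
                   ((\<Sum>i<N. Lop \<mu> a b y T \<psi> (xs i))
                    - mfilt \<mu> a0 a b y T \<psi> * (\<Sum>i<N. Lop \<mu> a b y T (\<lambda>_. 1) (xs i))) \<bar> > \<delta>})
          / ereal ((bN N)\<^sup>2)) = -\<infinity>"
proof -
  interpret hmm \<mu> \<nu> a0 a b y
    by (rule hmm.intro[OF mu_sets mu_sf y_mem a0_meas a0_nn a0_dens a_meas a_nn b_meas b_nn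
          A0_bdd A0_pos A0_kappa])
  obtain t where T: "T = Suc t"
    using T_ge by (cases T) auto
  have "\<psi> \<in> borel_measurable \<mu>"
    using psi_meas borel_measurable_mu_iff by blast
  then show ?thesis
    unfolding T diff_Suc_1
    by (rule pf_linearization_tail[OF _ psi_bdd bN_pos delta_pos])
      (rule limsup_eln_div_sq_eq_minf[OF bN_pos bN_lim bN_lim2])
qed

end
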